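(* For every $2\le n\le N$, as an identity of rational functions of $x$, $$\mathbb K_{n-1}(x)=\mathscr C_{2,n}(x)\,K_n(x)+\mathscr D_{2,n}(x)\,K_{n-1}(x),$$ where $\mathscr C_{2,n}(x)=-\dfrac{\mathscr D_{1,n-1}(x)}{\beta_{n-1}}$ and $\mathscr D_{2,n}(x)=\mathscr C_{1,n-1}(x)+\mathscr C_{2,n}(x)\,(\alpha_{n-1}-x)$.
   Context: Fix an integer $N\ge 1$ and $0<p<1$. Notation: $(a)_0=1$, $(a)_k=a(a+1)\cdots(a+k-1)$ (Pochhammer symbol); $[z]_0=1$, $[z]_k=z(z-1)\cdots(z-k+1)$ (falling factorial). For a function $f$, $\Delta f(x)=f(x+1)-f(x)$, $\nabla f(x)=f(x)-f(x-1)$, $\Delta^0$ is the identity and $\Delta^k=\Delta\circ\Delta^{k-1}$. For $0\le n\le N$ the monic Kravchuk polynomial is $K_n(x)=p^n(-N)_n\sum_{k=0}^{n}\frac{(-n)_k(-x)_k}{(-N)_k\,k!}p^{-k}$, and $K_{-1}=0$; these are monic of degree $n$ and orthogonal on $\{0,\dots,N\}$ with respect to the binomial weight $w(x)=\binom{N}{x}p^x(1-p)^{N-x}$, with $\|K_n\|^2=\sum_{x=0}^N K_n(x)^2w(x)=n!(-N)_np^n(p-1)^n$. They satisfy $xK_n=K_{n+1}+\alpha_nK_n+\beta_nK_{n-1}$ with $\alpha_n=p(N-n)+n(1-p)$, $\beta_n=np(1-p)(N-n+1)$. For $1\le n\le N+1$ and integers $i,l\ge0$, $\mathscr K_{n-1}^{(i,l)}(x,y)=\sum_{k=0}^{n-1}\frac{\Delta^iK_k(x)\,\Delta^lK_k(y)}{\|K_k\|^2}$.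 Fix $\lambda,\mu>0$ and an integer $j\ge 0$. On real polynomials define $\langle f,g\rangle_{\lambda,\mu}=\sum_{x=0}^N f(x)g(x)w(x)+\lambda\Delta^jf(0)\Delta^jg(0)+\mu\Delta^jf(N)\Delta^jg(N)$. For $0\le n\le N$, $\mathbb K_n=\mathbb K_n^{(j)}$ is the monic polynomial of degree $n$ with $\langle\mathbb K_n,q\rangle_{\lambda,\mu}=0$ for all polynomials $q$ of degree $<n$ (Kravchuk–Sobolev polynomials). For $1\le n\le N$: $\mathscr A_n(x,y)=\frac{j!}{\|K_{n-1}\|^2[x-y]_{j+1}}\sum_{k=0}^{j}\frac{\Delta^kK_{n-1}(y)}{k!}[x-y]_k$, $\mathscr B_n(x,y)=-\frac{j!}{\|K_{n-1}\|^2[x-y]_{j+1}}\sum_{k=0}^{j}\frac{\Delta^kK_{n}(y)}{k!}[x-y]_k$; $k_{00}=\mathscr K^{(j,j)}_{n-1}(0,0)$, $k_{0N}=\mathscr K^{(j,j)}_{n-1}(0,N)$, $k_{N0}=\mathscr K^{(j,j)}_{n-1}(N,0)$, $k_{NN}=\mathscr K^{(j,j)}_{n-1}(N,N)$, $d_0=\Delta^jK_n(0)$, $d_N=\Delta^jK_n(N)$, $\delta_n=(1+\lambda k_{00})(1+\mu k_{NN})-\lambda\mu k_{0N}k_{N0}$ (which is nonzero), $\Phi_1(n)=\frac{d_0(1+\mu k_{NN})-\mu k_{0N}d_N}{\delta_n}$, $\Phi_2(n)=\frac{(1+\lambda k_{00})d_N-\lambda k_{N0}d_0}{\delta_n}$;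 $\mathscr C_{1,n}(x)=1-\lambda\Phi_1(n)\mathscr A_n(x,0)-\mu\Phi_2(n)\mathscr A_n(x,N)$ and $\mathscr D_{1,n}(x)=-\lambda\Phi_1(n)\mathscr B_n(x,0)-\mu\Phi_2(n)\mathscr B_n(x,N)$. *)

theory Defs
  imports "HOL-Computational_Algebra.Polynomial" Complex_Main
begin

definition fdiff :: "(real \<Rightarrow> real) \<Rightarrow> real \<Rightarrow> real" where
  "fdiff f x = f (x + 1) - f x"

abbreviation fdiff_pow :: "nat \<Rightarrow> (real \<Rightarrow> real) \<Rightarrow> real \<Rightarrow> real" where
  "fdiff_pow i f \<equiv> (fdiff ^^ i) f"

definition ffac :: "real \<Rightarrow> nat \<Rightarrow> real" where
  "ffac z k = (\<Prod>i<k. z - real i)"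

definition bweight :: "nat \<Rightarrow> real \<Rightarrow> nat \<Rightarrow> real" where
  "bweight N p x = real (N choose x) * p ^ x * (1 - p) ^ (N - x)"

text \<open>Monic Kravchuk polynomial K_n (as a function of x).\<close>
definition krav :: "nat \<Rightarrow> real \<Rightarrow> nat \<Rightarrow> real \<Rightarrow> real" where
  "krav N p n x = p ^ n * pochhammer (- real N) n *
     (\<Sum>k=0..n. pochhammer (- real n) k * pochhammer (- x) k
                 / (pochhammer (- real N) k * fact k) * (1 / p) ^ k)"

definition krav_nrm :: "nat \<Rightarrow> real \<Rightarrow> nat \<Rightarrow> real" where
  "krav_nrm N p n = (\<Sum>x=0..N. (krav N p n (real x))^2 * bweight N p x)"

definition alpha_c :: "nat \<Rightarrow> real \<Rightarrow> nat \<Rightarrow> real" where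
  "alpha_c N p n = p * (real N - real n) + real n * (1 - p)"

definition beta_c :: "nat \<Rightarrow> real \<Rightarrow> nat \<Rightarrow> real" where
  "beta_c N p n = real n * p * (1 - p) * (real N - real n + 1)"

text \<open>Kernel polynomial (script K)_{n-1}^{(i,l)}(x,y); argument n means the sum over k = 0..n-1.\<close>
definition kker :: "nat \<Rightarrow> real \<Rightarrow> nat \<Rightarrow> nat \<Rightarrow> nat \<Rightarrow> real \<Rightarrow> real \<Rightarrow> real" where
  "kker N p n i l x y = (\<Sum>k<n. fdiff_pow i (krav N p k) x * fdiff_pow l (krav N p k) y
                                  / krav_nrm N p k)"

definition sob_ip :: "nat \<Rightarrow> real \<Rightarrow> real \<Rightarrow> real \<Rightarrow> nat \<Rightarrow> real poly \<Rightarrow> real poly \<Rightarrow> real" where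
  "sob_ip N p lam mu j f g =
     (\<Sum>x=0..N. poly f (real x) * poly g (real x) * bweight N p x)
     + lam * fdiff_pow j (poly f) 0 * fdiff_pow j (poly g) 0
     + mu * fdiff_pow j (poly f) (real N) * fdiff_pow j (poly g) (real N)"

definition ks_poly :: "nat \<Rightarrow> real \<Rightarrow> real \<Rightarrow> real \<Rightarrow> nat \<Rightarrow> nat \<Rightarrow> real poly" where
  "ks_poly N p lam mu j n = (THE q. degree q = n \<and> lead_coeff q = 1 \<and>
      (\<forall>r. degree r < n \<longrightarrow> sob_ip N p lam mu j q r = 0))"

definition ks :: "nat \<Rightarrow> real \<Rightarrow> real \<Rightarrow> real \<Rightarrow> nat \<Rightarrow> nat \<Rightarrow> real \<Rightarrow> real" where
  "ks N p lam mu j n x = poly (ks_poly N p lam mu j n) x"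

definition A_fn :: "nat \<Rightarrow> real \<Rightarrow> nat \<Rightarrow> nat \<Rightarrow> real \<Rightarrow> real \<Rightarrow> real" where
  "A_fn N p j n x y = fact j / (krav_nrm N p (n - 1) * ffac (x - y) (j + 1)) *
      (\<Sum>k=0..j. fdiff_pow k (krav N p (n - 1)) y / fact k * ffac (x - y) k)"

definition B_fn :: "nat \<Rightarrow> real \<Rightarrow> nat \<Rightarrow> nat \<Rightarrow> real \<Rightarrow> real \<Rightarrow> real" where
  "B_fn N p j n x y = - (fact j / (krav_nrm N p (n - 1) * ffac (x - y) (j + 1)) *
      (\<Sum>k=0..j. fdiff_pow k (krav N p n) y / fact k * ffac (x - y) k))"

definition delta_c :: "nat \<Rightarrow> real \<Rightarrow> real \<Rightarrow> real \<Rightarrow> nat \<Rightarrow> nat \<Rightarrow> real" where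
  "delta_c N p lam mu j n =
     (1 + lam * kker N p n j j 0 0) * (1 + mu * kker N p n j j (real N) (real N))
     - lam * mu * kker N p n j j 0 (real N) * kker N p n j j (real N) 0"

definition Phi1 :: "nat \<Rightarrow> real \<Rightarrow> real \<Rightarrow> real \<Rightarrow> nat \<Rightarrow> nat \<Rightarrow> real" where
  "Phi1 N p lam mu j n =
     (fdiff_pow j (krav N p n) 0 * (1 + mu * kker N p n j j (real N) (real N))
      - mu * kker N p n j j 0 (real N) * fdiff_pow j (krav N p n) (real N))
     / delta_c N p lam mu j n"

definition Phi2 :: "nat \<Rightarrow> real \<Rightarrow> real \<Rightarrow> real \<Rightarrow> nat \<Rightarrow> nat \<Rightarrow> real" where
  "Phi2 N p lam mu j n =
     ((1 + lam * kker N p n j j 0 0) * fdiff_pow j (krav N p n) (real N)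
      - lam * kker N p n j j (real N) 0 * fdiff_pow j (krav N p n) 0)
     / delta_c N p lam mu j n"

definition C1 :: "nat \<Rightarrow> real \<Rightarrow> real \<Rightarrow> real \<Rightarrow> nat \<Rightarrow> nat \<Rightarrow> real \<Rightarrow> real" where
  "C1 N p lam mu j n x = 1 - lam * Phi1 N p lam mu j n * A_fn N p j n x 0
                           - mu * Phi2 N p lam mu j n * A_fn N p j n x (real N)"

definition D1 :: "nat \<Rightarrow> real \<Rightarrow> real \<Rightarrow> real \<Rightarrow> nat \<Rightarrow> nat \<Rightarrow> real \<Rightarrow> real" where
  "D1 N p lam mu j n x = - lam * Phi1 N p lam mu j n * B_fn N p j n x 0
                         - mu * Phi2 N p lam mu j n * B_fn N p j n x (real N)"

definition C2 :: "nat \<Rightarrow> real \<Rightarrow> real \<Rightarrow> real \<Rightarrow> nat \<Rightarrow> nat \<Rightarrow> real \<Rightarrow> real" where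
  "C2 N p lam mu j n x = - D1 N p lam mu j (n - 1) x / beta_c N p (n - 1)"

definition D2 :: "nat \<Rightarrow> real \<Rightarrow> real \<Rightarrow> real \<Rightarrow> nat \<Rightarrow> nat \<Rightarrow> real \<Rightarrow> real" where
  "D2 N p lam mu j n x = C1 N p lam mu j (n - 1) x
                         + C2 N p lam mu j n x * (alpha_c N p (n - 1) - x)"

end

theory Submission
  imports Defs "HOL-Analysis.Convex"
begin

text \<open>Write \<open>m = n - 1\<close> and let \<open>\<K>(t, y)\<close> be the kernel \<open>kker N p m 0 j t y\<close>, a polynomial of
  degree \<open>< m\<close> in \<open>t\<close> which reproduces \<open>\<Delta>\<^sup>j\<close> at \<open>y\<close> on polynomials of degree \<open>< m\<close>.
  Hence \<open>K\<^sub>m - \<lambda> a \<K>(\<cdot>, 0) - \<mu> b \<K>(\<cdot>, N)\<close> is orthogonal for the Sobolev product exactly when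
  its \<open>j\<close>-th differences at \<open>0\<close> and \<open>N\<close> are \<open>a\<close> and \<open>b\<close>; this \<open>2 \<times> 2\<close> system is solved by
  \<open>\<Phi>\<^sub>1, \<Phi>\<^sub>2\<close>, its determinant \<open>\<delta>\<close> being \<open>\<ge> 1\<close> by Cauchy--Schwarz.
  By Christoffel--Darboux, \<open>\<K>(t, y)\<close> is a combination of \<open>K\<^sub>m(t)/(x - t)\<close> and
  \<open>K\<^sub>m\<^sub>-\<^sub>1(t)/(x - t)\<close>, and the \<open>j\<close>-th difference of such a quotient is a truncated Newton series;
  this gives \<open>\<bbbK>\<^sub>m = \<C>\<^sub>1 K\<^sub>m + \<D>\<^sub>1 K\<^sub>m\<^sub>-\<^sub>1\<close>. Eliminating \<open>K\<^sub>m\<^sub>-\<^sub>1\<close> by the three-term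
  recurrence yields the statement.\<close>

section \<open>Finite differences and falling factorials\<close>

lemma fdiff_pow_Suc: "fdiff_pow (Suc i) f x = fdiff_pow i f (x + 1) - fdiff_pow i f x"
  by (simp add: fdiff_def)

lemma fdiff_pow_diff: "fdiff_pow i (\<lambda>x. f x - g x) y = fdiff_pow i f y - fdiff_pow i g y"
  by (induction i arbitrary: y) (simp_all add: fdiff_def)

lemma fdiff_pow_cmult: "fdiff_pow i (\<lambda>x. c * f x) y = c * fdiff_pow i f y"
  by (induction i arbitrary: y) (simp_all add: fdiff_def algebra_simps)

lemma fdiff_pow_sum: "fdiff_pow i (\<lambda>x. \<Sum>k\<in>A. f k x) y = (\<Sum>k\<in>A. fdiff_pow i (f k) y)"
  by (induction i arbitrary: y) (simp_all add: fdiff_def sum_subtractf)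

lemma fdiff_pow_cong:
  assumes "\<And>k. k \<le> i \<Longrightarrow> f (y + real k) = g (y + real k)"
  shows "fdiff_pow i f y = fdiff_pow i g y"
  using assms
proof (induction i arbitrary: y)
  case 0
  then show ?case using 0[of 0] by simp
next
  case (Suc i)
  have "fdiff_pow i f y = fdiff_pow i g y"
    using Suc.prems by (intro Suc.IH) auto
  moreover have "fdiff_pow i f (y + 1) = fdiff_pow i g (y + 1)"
    using Suc.prems[of "Suc _"] by (intro Suc.IH) (auto simp: add.assoc)
  ultimately show ?case by (simp only: fdiff_pow_Suc)
qed

lemma ffac_0 [simp]: "ffac z 0 = 1"
  by (simp add: ffac_def)

lemma ffac_Suc: "ffac z (Suc k) = ffac z k * (z - real k)"
  by (simp add: ffac_def)

lemma ffac_Suc_left: "ffac z (Suc k) = z * ffac (z - 1) k"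
  by (induction k) (simp_all add: ffac_def algebra_simps)

lemma ffac_add: "ffac z (a + b) = ffac z a * ffac (z - real a) b"
  by (induction b) (simp_all add: ffac_def algebra_simps)

lemma ffac_eq_0_iff: "ffac z k = 0 \<longleftrightarrow> (\<exists>i<k. z = real i)"
  by (auto simp: ffac_def)

lemma ffac_of_nat: "k \<le> x \<Longrightarrow> ffac (real x) k = fact x / fact (x - k)"
proof (induction k)
  case 0
  then show ?case by (simp add: ffac_def)
next
  case (Suc k)
  have "x - k = Suc (x - Suc k)" using Suc.prems by simp
  then have fact_eq: "fact (x - k) = (real x - real k) * (fact (x - Suc k) :: real)"
    using Suc.prems by (simp add: of_nat_diff)
  have "real x - real k \<noteq> 0" using Suc.prems by simp
  then show ?case
    unfolding ffac_Suc Suc.IH[OF Suc_leD[OF Suc.prems]] fact_eq by (simp add: field_simps)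
qed

lemma pochhammer_minus_eq_ffac: "pochhammer (- z) k = (-1) ^ k * ffac z k"
  by (induction k) (simp_all add: pochhammer_Suc ffac_Suc ffac_def algebra_simps)

lemma ffac_div_fact_eq_binomial: "k \<le> n \<Longrightarrow> ffac (real n) k / fact k = real (n choose k)"
  by (simp add: ffac_of_nat binomial_fact field_simps)

definition newton_sum :: "(real \<Rightarrow> real) \<Rightarrow> nat \<Rightarrow> real \<Rightarrow> real \<Rightarrow> real" where
  "newton_sum g j y x = (\<Sum>k=0..j. fdiff_pow k g y / fact k * ffac (x - y) k)"

lemma newton_sum_Suc:
  "newton_sum g (Suc j) y x = newton_sum g j y x + fdiff_pow (Suc j) g y / fact (Suc j) * ffac (x - y) (Suc j)"
  by (simp add: newton_sum_def)

lemma newton_sum_shift: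
  "(x - y) * newton_sum g j (y + 1) x - (x - y - real (Suc j)) * newton_sum g j y x
     = real (Suc j) * newton_sum g (Suc j) y x"
proof (induction j)
  case 0
  then show ?case by (simp add: newton_sum_def fdiff_def ffac_def algebra_simps)
next
  case (Suc j)
  define T where "T = fdiff_pow (Suc j) g y / fact (Suc j)"
  define U where "U = fdiff_pow (Suc (Suc j)) g y / fact (Suc j)"
  have "fdiff_pow (Suc j) g (y + 1) / fact (Suc j) = T + U"
    unfolding T_def U_def fdiff_pow_Suc[of "Suc j"] by (simp add: diff_divide_distrib)
  moreover have "real (Suc (Suc j)) * (fdiff_pow (Suc (Suc j)) g y / fact (Suc (Suc j))
      * ffac (x - y) (Suc (Suc j))) = U * ffac (x - y) (Suc j) * (x - y - real (Suc j))"
  proof -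
    have "fact (Suc (Suc j)) = real (Suc (Suc j)) * (fact (Suc j) :: real)"
      by simp
    then show ?thesis
      unfolding U_def ffac_Suc[of _ "Suc j"] by (simp del: of_nat_Suc fact_Suc)
  qed
  moreover have "(x - y) * ffac (x - (y + 1)) (Suc j) = ffac (x - y) (Suc j) * (x - y - real (Suc j))"
    using ffac_Suc_left[of "x - y" "Suc j"] by (simp add: ffac_Suc[of _ "Suc j"] diff_diff_eq)
  ultimately show ?case
    using Suc.IH unfolding newton_sum_Suc[of g "Suc j"] newton_sum_Suc[of g j] T_def[symmetric] of_nat_Suc
    by algebra
qed

lemma fdiff_pow_divide_linear:
  assumes "ffac (x - y) (Suc j) \<noteq> 0"
  shows "fdiff_pow j (\<lambda>t. g t / (x - t)) y = fact j / ffac (x - y) (Suc j) * newton_sum g j y x"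
  using assms
proof (induction j arbitrary: y)
  case 0
  then show ?case by (simp add: newton_sum_def ffac_def)
next
  case (Suc j)
  have left: "ffac (x - y) (Suc (Suc j)) = ffac (x - y) (Suc j) * (x - y - real (Suc j))"
    by (rule ffac_Suc)
  have right: "ffac (x - y) (Suc (Suc j)) = (x - y) * ffac (x - (y + 1)) (Suc j)"
    by (simp add: ffac_Suc_left[of _ "Suc j"] diff_diff_eq)
  have nz: "ffac (x - y) (Suc j) \<noteq> 0" "x - y - real (Suc j) \<noteq> 0"
    using Suc.prems unfolding left by auto
  have nz': "x - y \<noteq> 0" "ffac (x - (y + 1)) (Suc j) \<noteq> 0"
    using Suc.prems unfolding right by auto
  have "fdiff_pow (Suc j) (\<lambda>t. g t / (x - t)) y
      = fact j * newton_sum g j (y + 1) x / ffac (x - (y + 1)) (Suc j)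
        - fact j * newton_sum g j y x / ffac (x - y) (Suc j)"
    using Suc.IH[OF nz(1)] Suc.IH[OF nz'(2)] unfolding fdiff_pow_Suc by simp
  also have "\<dots> = fact j * ((x - y) * newton_sum g j (y + 1) x
        - (x - y - real (Suc j)) * newton_sum g j y x) / ffac (x - y) (Suc (Suc j))"
  proof -
    have "fact j * newton_sum g j (y + 1) x / ffac (x - (y + 1)) (Suc j)
        = fact j * ((x - y) * newton_sum g j (y + 1) x) / ffac (x - y) (Suc (Suc j))"
      using nz'(1) unfolding right by simp
    moreover have "fact j * newton_sum g j y x / ffac (x - y) (Suc j)
        = fact j * ((x - y - real (Suc j)) * newton_sum g j y x) / ffac (x - y) (Suc (Suc j))"
    proof -
      have cancel: "c \<noteq> 0 \<Longrightarrow> a * b / d = a * (c * b) / (d * c)" for a b c d :: real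
        by simp
      show ?thesis
        using cancel[OF nz(2)] unfolding left .
    qed
    ultimately show ?thesis by (simp add: diff_divide_distrib right_diff_distrib)
  qed
  also have "\<dots> = fact (Suc j) / ffac (x - y) (Suc (Suc j)) * newton_sum g (Suc j) y x"
    unfolding newton_sum_shift by simp
  finally show ?case .
qed

section \<open>The three-term recurrence\<close>

definition krav_coeff :: "nat \<Rightarrow> real \<Rightarrow> nat \<Rightarrow> nat \<Rightarrow> real" where
  "krav_coeff N p n k = p ^ n * pochhammer (- real N) n *
     (pochhammer (- real n) k / (pochhammer (- real N) k * fact k) * (1 / p) ^ k)"

lemma krav_coeff_rec_Suc:
  assumes p: "p \<noteq> 0" and iN: "Suc i \<le> N"
  shows "krav_coeff N p (Suc (Suc m)) (Suc i) = real (Suc i) * krav_coeff N p (Suc m) (Suc i)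
           - krav_coeff N p (Suc m) i - alpha_c N p (Suc m) * krav_coeff N p (Suc m) (Suc i)
           - beta_c N p (Suc m) * krav_coeff N p m (Suc i)"
proof -
  define u where "u = pochhammer (- real (Suc m)) i"
  define W where "W = pochhammer (- real N) m"
  define V where "V = pochhammer (- real N) i"
  define Z where "Z = p ^ m * W * u * (1 / p) ^ i / (V * fact i)"
  define D where "D = (real i - real N) * (real i + 1)"
  have V: "V \<noteq> 0" unfolding V_def pochhammer_eq_0_iff using iN by auto
  have D: "D \<noteq> 0" unfolding D_def using iN by auto
  have e1: "pochhammer (- real (Suc m)) (Suc i) = u * (real i - real m - 1)"
    by (simp add: u_def pochhammer_Suc)
  have e2: "pochhammer (- real (Suc (Suc m))) (Suc i) = (- real m - 2) * u"
    by (simp add: u_def pochhammer_rec)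
  have e3: "pochhammer (- real m) (Suc i) = u * (real i - real m - 1) * (real m - real i) / (real m + 1)"
  proof -
    have "pochhammer (- real (Suc m)) (Suc (Suc i)) = - real (Suc m) * pochhammer (- real m) (Suc i)"
      using pochhammer_rec[of "- real (Suc m)" "Suc i"] by simp
    moreover have "pochhammer (- real (Suc m)) (Suc (Suc i)) = u * (real i - real m - 1) * (real i - real m)"
      by (simp add: u_def pochhammer_Suc algebra_simps)
    ultimately show ?thesis by (simp add: field_simps)
  qed
  have e4: "pochhammer (- real N) (Suc (Suc m)) = W * (real m - real N) * (real m + 1 - real N)"
    by (simp add: W_def pochhammer_Suc)
  have e5: "pochhammer (- real N) (Suc m) = W * (real m - real N)"
    by (simp add: W_def pochhammer_Suc)
  have e6: "pochhammer (- real N) (Suc i) * fact (Suc i) = V * fact i * D"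
    by (simp add: V_def D_def pochhammer_Suc algebra_simps)
  \<comment> \<open>All four coefficients are multiples of \<open>Z\<close>, so the recurrence reduces to the identity \<open>key\<close>.\<close>
  define A where "A = p * (real m - real N) * (real m + 1 - real N) * (- real m - 2)"
  define B where "B = (real m - real N) * (real i - real m - 1)"
  define C where "C = p * (real m - real N)"
  define E where "E = (1 - p) * (real N - real m) * ((real i - real m - 1) * (real m - real i))"
  have c1: "krav_coeff N p (Suc (Suc m)) (Suc i) = Z * (A / D)"
    unfolding krav_coeff_def e2 e4 mult.assoc[symmetric] e6 using p V D
    by (simp add: Z_def A_def W_def[symmetric] field_simps)
  have c2: "krav_coeff N p (Suc m) (Suc i) = Z * (B / D)"
    unfolding krav_coeff_def e1 e5 mult.assoc[symmetric] e6 using p V D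
    by (simp add: Z_def B_def W_def[symmetric] field_simps)
  have c3: "krav_coeff N p (Suc m) i = Z * C"
    unfolding krav_coeff_def e5 u_def[symmetric] V_def[symmetric] using p V
    by (simp add: Z_def C_def field_simps)
  have c4: "beta_c N p (Suc m) * krav_coeff N p m (Suc i) = Z * (E / D)"
  proof -
    have cf: "krav_coeff N p m (Suc i) = Z * ((real i - real m - 1) * (real m - real i) / ((real m + 1) * p * D))"
      unfolding krav_coeff_def e3 mult.assoc[symmetric] e6 using p V D
      by (simp add: Z_def W_def[symmetric] field_simps)
    have b: "beta_c N p (Suc m) = (real m + 1) * p * ((1 - p) * (real N - real m))"
      by (simp add: beta_c_def algebra_simps)
    have cancel: "c \<noteq> 0 \<Longrightarrow> c * a * (Z * (b / (c * D))) = Z * (a * b / D)" for a b c :: real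
      by simp
    have "(real m + 1) * p \<noteq> 0" using p by simp
    then show ?thesis
      unfolding cf b E_def by (rule cancel)
  qed
  have key: "A = real (Suc i) * B - C * D - alpha_c N p (Suc m) * B - E"
    unfolding A_def B_def C_def D_def E_def alpha_c_def by (simp add: algebra_simps)
  show ?thesis
    unfolding c1 c2 c3 c4 key using D by (simp add: field_simps)
qed

lemma krav_eq_coeff_sum: "krav N p n x = (\<Sum>k=0..n. krav_coeff N p n k * pochhammer (- x) k)"
  unfolding krav_def krav_coeff_def by (simp add: sum_distrib_left mult_ac)

lemma krav_coeff_eq_0: "n < k \<Longrightarrow> krav_coeff N p n k = 0"
  unfolding krav_coeff_def using pochhammer_of_nat_eq_0_lemma[of n k, where 'a=real] by simp

lemma krav_eq_coeff_sum_upto: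
  "n \<le> M \<Longrightarrow> krav N p n x = (\<Sum>k=0..M. krav_coeff N p n k * pochhammer (- x) k)"
  unfolding krav_eq_coeff_sum by (rule sum.mono_neutral_left) (auto simp: krav_coeff_eq_0)

lemma krav_coeff_rec_0:
  "krav_coeff N p (Suc (Suc m)) 0
     = - alpha_c N p (Suc m) * krav_coeff N p (Suc m) 0 - beta_c N p (Suc m) * krav_coeff N p m 0"
  unfolding krav_coeff_def alpha_c_def beta_c_def by (simp add: pochhammer_Suc) algebra

lemma krav_coeff_Suc_N: "krav_coeff N p m (Suc N) = 0"
  unfolding krav_coeff_def by (simp add: pochhammer_eq_0_iff)

lemma krav_coeff_rec:
  assumes "p \<noteq> 0" "Suc (Suc m) \<le> N"
  shows "krav_coeff N p (Suc (Suc m)) k = real k * krav_coeff N p (Suc m) k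
           - (if k = 0 then 0 else krav_coeff N p (Suc m) (k - 1))
           - alpha_c N p (Suc m) * krav_coeff N p (Suc m) k - beta_c N p (Suc m) * krav_coeff N p m k"
proof (cases k)
  case 0
  then show ?thesis using krav_coeff_rec_0 by simp
next
  case (Suc i)
  show ?thesis
  proof (cases "Suc i \<le> N")
    case True
    then show ?thesis using krav_coeff_rec_Suc[OF assms(1) True] Suc by simp
  next
    case False
    then have "i = N \<or> Suc (Suc m) < i" using assms(2) by linarith
    then show ?thesis
      using Suc assms(2) by (auto simp: krav_coeff_Suc_N krav_coeff_eq_0)
  qed
qed

lemma krav_three_term_rec:
  assumes p: "p \<noteq> 0" and mN: "Suc (Suc m) \<le> N"
  shows "krav N p (Suc (Suc m)) x
           = (x - alpha_c N p (Suc m)) * krav N p (Suc m) x - beta_c N p (Suc m) * krav N p m x"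
proof -
  define M where "M = Suc (Suc m)"
  define c where "c = krav_coeff N p"
  define P where "P = (\<lambda>k. pochhammer (- x) k)"
  have x_P: "x * P k = real k * P k - P (Suc k)" for k
    unfolding P_def by (simp add: pochhammer_Suc algebra_simps)
  have K: "krav N p n x = (\<Sum>k=0..M. c n k * P k)" if "n \<le> M" for n
    unfolding c_def P_def using that by (rule krav_eq_coeff_sum_upto)
  have K1: "krav N p (Suc m) x = (\<Sum>k=0..M. c (Suc m) k * P k)"
    by (rule K) (simp add: M_def)
  have shift: "(\<Sum>k=0..M. (if k = 0 then 0 else c (Suc m) (k - 1)) * P k)
      = (\<Sum>k=0..M. c (Suc m) k * P (Suc k))"
  proof -
    have "(\<Sum>k=0..M. (if k = 0 then 0 else c (Suc m) (k - 1)) * P k)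
        = (\<Sum>k=0..Suc m. c (Suc m) k * P (Suc k))"
      unfolding M_def by (subst sum.atLeast0_atMost_Suc_shift) simp
    also have "\<dots> = (\<Sum>k=0..M. c (Suc m) k * P (Suc k))"
      unfolding M_def c_def by (simp add: krav_coeff_eq_0)
    finally show ?thesis .
  qed
  have "krav N p M x = (\<Sum>k=0..M. (real k * c (Suc m) k - (if k = 0 then 0 else c (Suc m) (k - 1))
           - alpha_c N p (Suc m) * c (Suc m) k - beta_c N p (Suc m) * c m k) * P k)"
    unfolding K[OF order_refl] c_def using krav_coeff_rec[OF p mN] by (simp add: M_def)
  also have "\<dots> = ((\<Sum>k=0..M. real k * c (Suc m) k * P k)
        - (\<Sum>k=0..M. (if k = 0 then 0 else c (Suc m) (k - 1)) * P k))
      - alpha_c N p (Suc m) * (\<Sum>k=0..M. c (Suc m) k * P k) - beta_c N p (Suc m) * (\<Sum>k=0..M. c m k * P k)"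
    by (simp add: left_diff_distrib sum_subtractf sum_distrib_left mult.assoc)
  also have "(\<Sum>k=0..M. real k * c (Suc m) k * P k)
        - (\<Sum>k=0..M. (if k = 0 then 0 else c (Suc m) (k - 1)) * P k) = x * krav N p (Suc m) x"
  proof -
    have "x * krav N p (Suc m) x = (\<Sum>k=0..M. c (Suc m) k * (x * P k))"
      unfolding K1 sum_distrib_left by (simp add: mult_ac)
    then show ?thesis
      unfolding shift x_P right_diff_distrib sum_subtractf by (simp add: mult_ac)
  qed
  finally show ?thesis
    using K[of m] K1 by (simp add: M_def algebra_simps)
qed

section \<open>Orthogonality\<close>

lemma degree_prod_linear: "degree (\<Prod>i<k. [:a i, -1 :: 'a :: idom:]) = k"
  by (subst degree_prod_eq_sum_degree) auto

lemma lead_coeff_prod_linear: "lead_coeff (\<Prod>i<k. [:a i, -1 :: 'a :: idom:]) = (-1) ^ k"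
  by (simp add: lead_coeff_prod)

definition krav_poly :: "nat \<Rightarrow> real \<Rightarrow> nat \<Rightarrow> real poly" where
  "krav_poly N p n = (\<Sum>k=0..n. smult (krav_coeff N p n k) (\<Prod>i<k. [:real i, -1:]))"

lemma poly_krav_poly [simp]: "poly (krav_poly N p n) = krav N p n"
proof
  fix x
  have "poly (\<Prod>i<k. [:real i, -1:]) x = pochhammer (- x) k" for k
    by (simp add: poly_prod pochhammer_prod atLeast0LessThan)
  then show "poly (krav_poly N p n) x = krav N p n x"
    unfolding krav_poly_def krav_eq_coeff_sum by (simp add: poly_sum)
qed

lemma coeff_krav_poly_top:
  assumes "n \<le> N" "p \<noteq> 0"
  shows "coeff (krav_poly N p n) n = 1"
proof -
  have "pochhammer (- real N) n \<noteq> 0" using assms(1) by (auto simp: pochhammer_eq_0_iff)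
  moreover have "pochhammer (- real n) n = (-1) ^ n * fact n"
    using pochhammer_minus[of "real n" n] by (simp add: pochhammer_fact)
  ultimately have "krav_coeff N p n n = (-1) ^ n"
    unfolding krav_coeff_def using assms(2) by (simp add: field_simps power_one_over)
  moreover have "coeff (\<Prod>i<k. [:real i, -1:]) n = 0" if "k < n" for k
    using that by (intro coeff_eq_0) (simp add: degree_prod_linear)
  moreover have "coeff (\<Prod>i<n. [:real i, -1:]) n = (-1) ^ n"
    using lead_coeff_prod_linear[of "\<lambda>i. real i" n] by (simp add: degree_prod_linear)
  ultimately have "(\<Sum>k=0..n. krav_coeff N p n k * coeff (\<Prod>i<k. [:real i, -1:]) n)
      = krav_coeff N p n n * coeff (\<Prod>i<n. [:real i, -1:]) n"
    by (subst sum.mono_neutral_right[of "{0..n}" "{n}"]) auto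
  then show ?thesis
    using \<open>krav_coeff N p n n = (-1) ^ n\<close> \<open>coeff (\<Prod>i<n. [:real i, -1:]) n = (-1) ^ n\<close>
    by (simp add: krav_poly_def coeff_sum flip: power_mult_distrib)
qed

lemma degree_krav_poly_le: "degree (krav_poly N p n) \<le> n"
  unfolding krav_poly_def
  by (rule degree_sum_le) (auto intro: order.trans[OF degree_smult_le] simp: degree_prod_linear)

lemma degree_krav_poly: "n \<le> N \<Longrightarrow> p \<noteq> 0 \<Longrightarrow> degree (krav_poly N p n) = n"
  using degree_krav_poly_le[of N p n] coeff_krav_poly_top[of n N p]
  by (metis le_antisym le_degree zero_neq_one)

lemma lead_coeff_krav_poly: "n \<le> N \<Longrightarrow> p \<noteq> 0 \<Longrightarrow> lead_coeff (krav_poly N p n) = 1"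
  using degree_krav_poly coeff_krav_poly_top by simp

lemma ffac_of_nat_eq_0: "x < k \<Longrightarrow> ffac (real x) k = 0"
  by (auto simp: ffac_eq_0_iff)

lemma ffac_mult_ffac_eq_0:
  assumes "x \<le> N" "x < k \<or> N < x + m"
  shows "ffac (real x) k * ffac (real N - real x) m = 0"
proof (cases "x < k")
  case True
  then show ?thesis by (simp add: ffac_of_nat_eq_0)
next
  case False
  then have "N - x < m" using assms by auto
  then have "ffac (real (N - x)) m = 0" by (rule ffac_of_nat_eq_0)
  then show ?thesis using assms(1) by (simp add: of_nat_diff)
qed

lemma bweight_ffac_shift:
  assumes N: "N = M + k + m" and y: "y \<le> M"
  shows "bweight N p (y + k) * ffac (real (y + k)) k * ffac (real N - real (y + k)) m
       = ffac (real N) (k + m) * p ^ k * (1 - p) ^ m * (real (M choose y) * p ^ y * (1 - p) ^ (M - y))"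
proof -
  define a where "a = N - (y + k)"
  have a: "a = (M - y) + m" using y N by (simp add: a_def)
  have "real N - real (y + k) = real a" using y N by (simp add: a_def of_nat_diff)
  moreover have "ffac (real (y + k)) k = fact (y + k) / fact y" by (subst ffac_of_nat) auto
  moreover have "ffac (real a) m = fact a / fact (M - y)" by (subst ffac_of_nat) (auto simp: a)
  moreover have "ffac (real N) (k + m) = fact N / fact M" by (subst ffac_of_nat) (auto simp: N)
  moreover have "real (N choose (y + k)) = fact N / (fact (y + k) * fact a)"
    using y N by (subst binomial_fact) (auto simp: a_def)
  moreover have "real (M choose y) = fact M / (fact y * fact (M - y))"
    using y by (subst binomial_fact) auto
  moreover have "(1 - p) ^ (N - (y + k)) = (1 - p) ^ (M - y) * (1 - p) ^ m"
    unfolding a_def[symmetric] a by (simp add: power_add)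
  ultimately show ?thesis
    unfolding bweight_def by (simp add: power_add)
qed

lemma binomial_moment_ffac:
  "(\<Sum>x=0..N. bweight N p x * ffac (real x) k * ffac (real N - real x) m)
     = ffac (real N) (k + m) * p ^ k * (1 - p) ^ m"
proof (cases "N < k + m")
  case True
  have "bweight N p x * ffac (real x) k * ffac (real N - real x) m = 0" if "x \<in> {0..N}" for x
  proof -
    have "x \<le> N" "x < k \<or> N < x + m" using that True by auto
    then show ?thesis using ffac_mult_ffac_eq_0 by (simp add: mult.assoc)
  qed
  moreover have "ffac (real N) (k + m) = 0" using True by (rule ffac_of_nat_eq_0)
  ultimately show ?thesis by (simp add: sum.neutral)
next
  case False
  define M where "M = N - (k + m)"
  have N: "N = M + k + m" using False by (simp add: M_def)
  define t where "t = (\<lambda>x. bweight N p x * ffac (real x) k * ffac (real N - real x) m)"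
  have "(\<Sum>x=0..N. t x) = (\<Sum>x=0+k..M+k. t x)"
  proof (rule sum.mono_neutral_right)
    show "\<forall>x\<in>{0..N} - {0+k..M+k}. t x = 0"
    proof
      fix x assume "x \<in> {0..N} - {0+k..M+k}"
      then have "x \<le> N" "x < k \<or> N < x + m" using N by auto
      then show "t x = 0" using ffac_mult_ffac_eq_0 unfolding t_def by (simp add: mult.assoc)
    qed
  qed (auto simp: N)
  also have "\<dots> = (\<Sum>y=0..M. t (y + k))"
    by (rule sum.shift_bounds_cl_nat_ivl)
  also have "\<dots> = (\<Sum>y=0..M. ffac (real N) (k + m) * p ^ k * (1 - p) ^ m
      * (real (M choose y) * p ^ y * (1 - p) ^ (M - y)))"
    unfolding t_def by (rule sum.cong[OF refl], rule bweight_ffac_shift[OF N], simp)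
  also have "\<dots> = ffac (real N) (k + m) * p ^ k * (1 - p) ^ m
      * (\<Sum>y=0..M. real (M choose y) * p ^ y * (1 - p) ^ (M - y))"
    by (simp add: sum_distrib_left)
  also have "(\<Sum>y=0..M. real (M choose y) * p ^ y * (1 - p) ^ (M - y)) = 1"
    using binomial_ring[of p "1 - p" M] by (simp add: atLeast0AtMost)
  finally show ?thesis unfolding t_def by simp
qed

lemma alternating_binomial_sum_Suc:
  fixes f :: "nat \<Rightarrow> real"
  shows "(\<Sum>k=0..Suc n. (-1)^k * real (Suc n choose k) * f k)
       = (\<Sum>k=0..n. (-1)^k * real (n choose k) * (f k - f (Suc k)))"
proof -
  have A: "(\<Sum>k=0..Suc n. (-1)^k * real (Suc n choose k) * f k)
     = f 0 + (\<Sum>k=0..n. (-1)^Suc k * real (n choose k) * f (Suc k))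
           + (\<Sum>k=0..n. (-1)^Suc k * real (n choose Suc k) * f (Suc k))"
    by (subst sum.atLeast0_atMost_Suc_shift) (simp add: algebra_simps flip: sum.distrib)
  have B: "(\<Sum>k=0..n. (-1)^Suc k * real (n choose Suc k) * f (Suc k))
         = (\<Sum>k=0..n. (-1)^k * real (n choose k) * f k) - f 0"
  proof -
    have "(\<Sum>k=0..Suc n. (-1)^k * real (n choose k) * f k)
        = f 0 + (\<Sum>k=0..n. (-1)^Suc k * real (n choose Suc k) * f (Suc k))"
      by (subst sum.atLeast0_atMost_Suc_shift) simp
    moreover have "(\<Sum>k=0..Suc n. (-1)^k * real (n choose k) * f k)
        = (\<Sum>k=0..n. (-1)^k * real (n choose k) * f k)"
      by simp
    ultimately show ?thesis by simp
  qed
  show ?thesis unfolding A B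
    by (simp add: sum_subtractf right_diff_distrib sum.distrib algebra_simps sum_negf)
qed

lemma alternating_binomial_sum_ffac:
  "m < n \<Longrightarrow> (\<Sum>k=0..n. (-1)^k * real (n choose k) * ffac (z - real k) m) = 0"
proof (induction n arbitrary: z m)
  case 0 then show ?case by simp
next
  case (Suc n)
  have "(\<Sum>k=0..Suc n. (-1)^k * real (Suc n choose k) * ffac (z - real k) m)
      = (\<Sum>k=0..n. (-1)^k * real (n choose k) * (ffac (z - real k) m - ffac (z - real (Suc k)) m))"
    by (rule alternating_binomial_sum_Suc)
  also have "\<dots> = 0"
  proof (cases m)
    case 0 then show ?thesis by simp
  next
    case (Suc m')
    have d: "ffac (z - real k) m - ffac (z - real (Suc k)) m = real m * ffac ((z - 1) - real k) m'" for k
    proof -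
      have e1: "z - real k - 1 = (z - 1) - real k" "z - real (Suc k) = (z - 1) - real k" by simp_all
      have d1: "ffac (z - real k) (Suc m') = (z - real k) * ffac ((z-1) - real k) m'"
        using ffac_Suc_left[of "z - real k" m'] unfolding e1 .
      have d2: "ffac (z - real (Suc k)) (Suc m') = ffac ((z-1) - real k) m' * ((z-1) - real k - real m')"
        using ffac_Suc[of "z - real (Suc k)" m'] unfolding e1 .
      have g: "\<And>G. (z - real k) * G - G * ((z-1) - real k - real m') = real (Suc m') * G"
        by (simp add: algebra_simps)
      show ?thesis unfolding Suc d1 d2 g ..
    qed
    have "(\<Sum>k=0..n. (-1)^k * real (n choose k) * ffac ((z - 1) - real k) m') = 0"
      using Suc.IH[of m' "z - 1"] Suc.prems Suc by simp
    then show ?thesis unfolding d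
      by (simp add: sum_distrib_left[symmetric] mult.assoc[symmetric] mult.commute[of "real m"]
          flip: sum_distrib_right)
  qed
  finally show ?case .
qed


lemma krav_orthogonal_ffac:
  assumes "n \<le> N" "p \<noteq> 0" "m < n"
  shows "(\<Sum>x=0..N. krav N p n (real x) * ffac (real N - real x) m * bweight N p x) = 0"
proof -
  have summand: "krav_coeff N p n k * (-1)^k * ffac (real N) (k + m) * p^k
       = p^n * pochhammer (- real N) n * ((-1)^k * real (n choose k) * ffac (real N - real k) m)"
    if "k \<le> n" for k
  proof -
    have "ffac (real N) k \<noteq> 0" using that assms(1) by (simp add: ffac_of_nat)
    moreover have "real (n choose k) = ffac (real n) k / fact k"
      using ffac_div_fact_eq_binomial[OF that] by simp
    ultimately show ?thesis
      unfolding krav_coeff_def pochhammer_minus_eq_ffac ffac_add using assms(2)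
      by (simp add: field_simps power_one_over flip: power_mult_distrib)
  qed
  have "(\<Sum>x=0..N. krav N p n (real x) * ffac (real N - real x) m * bweight N p x)
      = (\<Sum>k=0..n. krav_coeff N p n k * (-1)^k
           * (\<Sum>x=0..N. bweight N p x * ffac (real x) k * ffac (real N - real x) m))"
    unfolding krav_eq_coeff_sum pochhammer_minus_eq_ffac sum_distrib_right sum_distrib_left
    by (subst sum.swap) (simp add: mult_ac)
  also have "\<dots> = (\<Sum>k=0..n. p^n * pochhammer (- real N) n * (1-p)^m
      * ((-1)^k * real (n choose k) * ffac (real N - real k) m))"
    unfolding binomial_moment_ffac by (rule sum.cong) (use summand in \<open>auto simp: mult_ac\<close>)
  also have "\<dots> = 0"
    unfolding sum_distrib_left[symmetric] using alternating_binomial_sum_ffac[OF assms(3)] by simp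
  finally show ?thesis .
qed

lemma linear_functional_eq_0_below_degree:
  fixes F :: "real poly \<Rightarrow> real" and B :: "nat \<Rightarrow> real poly"
  assumes add: "\<And>a b. F (a + b) = F a + F b" and sm: "\<And>c a. F (smult c a) = c * F a"
    and degB: "\<And>k. k < n \<Longrightarrow> degree (B k) = k"
    and leadB: "\<And>k. k < n \<Longrightarrow> lead_coeff (B k) \<noteq> 0"
    and zero: "\<And>k. k < n \<Longrightarrow> F (B k) = 0"
  shows "degree q < n \<Longrightarrow> F q = 0"
proof (induction "degree q" arbitrary: q rule: less_induct)
  case less
  have F0: "F 0 = 0" using sm[of 0 0] by simp
  show ?case
  proof (cases "q = 0")
    case True then show ?thesis using F0 by simp
  next
    case False
    define d where "d = degree q"
    define c where "c = lead_coeff q / lead_coeff (B d)"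
    define q' where "q' = q - smult c (B d)"
    have dn: "d < n" using less.prems d_def by simp
    have q: "q = q' + smult c (B d)" unfolding q'_def by simp
    have degq': "degree q' \<le> d"
      unfolding q'_def d_def using degB[OF dn] d_def
      by (intro order.trans[OF degree_diff_le]) (auto intro: order.trans[OF degree_smult_le])
    have cq': "coeff q' d = 0"
      unfolding q'_def c_def d_def using leadB[OF dn[unfolded d_def]] degB[OF dn[unfolded d_def]]
      by simp
    have Fq': "F q' = 0"
    proof (cases "q' = 0")
      case True then show ?thesis using F0 by simp
    next
      case False
      then have "degree q' \<noteq> d" using cq' by (metis leading_coeff_0_iff)
      then have "degree q' < degree q" using degq' d_def by simp
      then show ?thesis using less.hyps[of q'] less.prems by simp
    qed
    have "F q = F q' + c * F (B d)" using q add sm by simp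
    then show ?thesis using Fq' zero[OF dn] by simp
  qed
qed

lemma degree_diff_less_if_coeff_eq:
  fixes p q :: "'a::ab_group_add poly"
  assumes "degree p \<le> n" "degree q \<le> n" "coeff p n = coeff q n" "p \<noteq> q \<or> 0 < n"
  shows "degree (p - q) < n"
proof (rule degree_lessI)
  show "p - q \<noteq> 0 \<or> 0 < n" using assms(4) by auto
  show "\<forall>k\<ge>n. coeff (p - q) k = 0"
    using assms(1-3) by (auto simp: le_less coeff_eq_0)
qed

lemma krav_orthogonal_poly:
  assumes "n \<le> N" "p \<noteq> 0" "degree q < n"
  shows "(\<Sum>x=0..N. krav N p n (real x) * poly q (real x) * bweight N p x) = 0"
proof -
  define F where "F = (\<lambda>q. \<Sum>x=0..N. krav N p n (real x) * poly q (real x) * bweight N p x)"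
  define B where "B = (\<lambda>m. \<Prod>i<m. [:real N - real i, -1:])"
  have "F q = 0"
  proof (rule linear_functional_eq_0_below_degree[where B=B and n=n])
    show "F (a + b) = F a + F b" for a b
      unfolding F_def by (simp add: algebra_simps sum.distrib)
    show "F (smult c a) = c * F a" for c a
      unfolding F_def by (simp add: sum_distrib_left mult_ac)
    show "degree (B k) = k" for k
      unfolding B_def by (rule degree_prod_linear)
    show "lead_coeff (B k) \<noteq> 0" for k
      unfolding B_def lead_coeff_prod_linear by simp
    show "F (B k) = 0" if "k < n" for k
    proof -
      have "poly (B k) x = ffac (real N - x) k" for x
        by (simp add: B_def poly_prod ffac_def algebra_simps)
      then show ?thesis
        unfolding F_def using krav_orthogonal_ffac[OF assms(1,2) that] by simp
    qed
  qed (use assms in auto)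
  then show ?thesis unfolding F_def .
qed

lemma krav_orthogonal:
  assumes "p \<noteq> 0" "k \<le> N" "l \<le> N" "k \<noteq> l"
  shows "(\<Sum>x=0..N. krav N p k (real x) * krav N p l (real x) * bweight N p x) = 0"
proof (cases "l < k")
  case True
  then show ?thesis
    using krav_orthogonal_poly[of k N p "krav_poly N p l"] degree_krav_poly[of l N p] assms by simp
next
  case False
  then show ?thesis
    using krav_orthogonal_poly[of l N p "krav_poly N p k"] degree_krav_poly[of k N p] assms
    by (simp add: mult_ac)
qed

lemma bweight_pos: "0 < p \<Longrightarrow> p < 1 \<Longrightarrow> x \<le> N \<Longrightarrow> 0 < bweight N p x"
  unfolding bweight_def by simp

lemma sum_square_poly_bweight_pos:
  assumes p: "0 < p" "p < 1" and q: "q \<noteq> 0" "degree q \<le> N"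
  shows "0 < (\<Sum>x=0..N. (poly q (real x))\<^sup>2 * bweight N p x)"
proof -
  have "\<exists>x\<in>{0..N}. poly q (real x) \<noteq> 0"
  proof (rule ccontr)
    assume "\<not> ?thesis"
    then have "real ` {0..N} \<subseteq> {x. poly q x = 0}" by auto
    then have "card (real ` {0..N}) \<le> card {x. poly q x = 0}"
      using poly_roots_finite[OF q(1)] by (rule card_mono[rotated])
    also have "\<dots> \<le> degree q" by (rule card_poly_roots_bound[OF q(1)])
    finally show False using q(2) by (simp add: card_image)
  qed
  then obtain x where x: "x \<in> {0..N}" "poly q (real x) \<noteq> 0" by blast
  show ?thesis
  proof (rule sum_pos2[OF _ x(1)])
    show "0 < (poly q (real x))\<^sup>2 * bweight N p x" using x bweight_pos[OF p, of x N] by simp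
    show "0 \<le> (poly q (real i))\<^sup>2 * bweight N p i" if "i \<in> {0..N}" for i
      using that bweight_pos[OF p, of i N] by simp
  qed simp
qed

lemma krav_nrm_pos:
  assumes "0 < p" "p < 1" "k \<le> N"
  shows "0 < krav_nrm N p k"
proof -
  have "krav_poly N p k \<noteq> 0" using lead_coeff_krav_poly[of k N p] assms by auto
  from sum_square_poly_bweight_pos[OF assms(1,2) this] show ?thesis
    using degree_krav_poly[of k N p] assms
    unfolding krav_nrm_def by simp
qed

lemma beta_c_mult_krav_nrm:
  assumes p: "0 < p" "p < 1" and mN: "Suc (Suc m) \<le> N"
  shows "beta_c N p (Suc m) * krav_nrm N p m = krav_nrm N p (Suc m)"
proof -
  have p0: "p \<noteq> 0" using p by simp
  define ip where "ip = (\<lambda>f g. \<Sum>x=0..N. f (real x) * g (real x) * bweight N p x)"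
  define K where "K = krav N p"
  have nrm: "krav_nrm N p k = ip (K k) (K k)" for k
    unfolding krav_nrm_def ip_def K_def by (simp add: power2_eq_square)
  have orth: "ip (K k) (K l) = 0" if "k \<le> N" "l \<le> N" "k \<noteq> l" for k l
    unfolding ip_def K_def using krav_orthogonal[OF p0 that] .
  have deg: "degree (pCons 0 (krav_poly N p m) - krav_poly N p (Suc m)) < Suc m"
    using mN p0 degree_krav_poly_le[of N p m] coeff_krav_poly_top[of m N p]
      degree_krav_poly_le[of N p "Suc m"] coeff_krav_poly_top[of "Suc m" N p]
    by (intro degree_diff_less_if_coeff_eq) simp_all
  have "ip (K (Suc m)) (\<lambda>x. x * K m x - K (Suc m) x) = 0"
    using krav_orthogonal_poly[OF _ p0 deg] mN unfolding ip_def K_def by (simp add: algebra_simps)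
  then have "krav_nrm N p (Suc m) = ip (\<lambda>x. x * K (Suc m) x) (K m)"
    unfolding nrm ip_def by (simp add: algebra_simps sum_subtractf)
  also have "\<dots> = ip (\<lambda>x. K (Suc (Suc m)) x + alpha_c N p (Suc m) * K (Suc m) x
                        + beta_c N p (Suc m) * K m x) (K m)"
    unfolding K_def krav_three_term_rec[OF p0 mN] by (simp add: algebra_simps)
  also have "\<dots> = ip (K (Suc (Suc m))) (K m) + alpha_c N p (Suc m) * ip (K (Suc m)) (K m)
                    + beta_c N p (Suc m) * ip (K m) (K m)"
    unfolding ip_def by (simp add: algebra_simps sum.distrib sum_distrib_left)
  also have "\<dots> = beta_c N p (Suc m) * krav_nrm N p m"
    using orth[of "Suc (Suc m)" m] orth[of "Suc m" m] mN unfolding nrm by simp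
  finally show ?thesis by simp
qed

section \<open>Christoffel--Darboux formula and the kernel\<close>

lemma krav_0 [simp]: "krav N p 0 x = 1"
  by (simp add: krav_def)

lemma krav_1: "0 < N \<Longrightarrow> p \<noteq> 0 \<Longrightarrow> krav N p (Suc 0) x = x - alpha_c N p 0"
  by (simp add: krav_def alpha_c_def field_simps)

lemma christoffel_darboux_step:
  fixes a0 a1 b0 b1 h0 h1 S x y \<alpha> \<beta> :: real
  assumes "h0 \<noteq> 0" "h1 \<noteq> 0" "\<beta> * h0 = h1" "(x - y) * S = (a1 * b0 - a0 * b1) / h0"
  shows "(x - y) * (S + a1 * b1 / h1)
           = (((x - \<alpha>) * a1 - \<beta> * a0) * b1 - a1 * ((y - \<alpha>) * b1 - \<beta> * b0)) / h1"
proof -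
  have "\<beta> \<noteq> 0" using assms(2,3) by auto
  then have "(x - y) * S = \<beta> * (a1 * b0 - a0 * b1) / h1"
    unfolding assms(4) assms(3)[symmetric] by simp
  then have "(x - y) * (S + a1 * b1 / h1) = (\<beta> * (a1 * b0 - a0 * b1) + (x - y) * a1 * b1) / h1"
    by (simp add: distrib_left add_divide_distrib)
  also have "\<beta> * (a1 * b0 - a0 * b1) + (x - y) * a1 * b1
      = ((x - \<alpha>) * a1 - \<beta> * a0) * b1 - a1 * ((y - \<alpha>) * b1 - \<beta> * b0)"
    by (simp add: algebra_simps)
  finally show ?thesis .
qed

lemma christoffel_darboux:
  assumes p: "0 < p" "p < 1" and nN: "Suc n \<le> N"
  shows "(x - y) * (\<Sum>k<Suc n. krav N p k x * krav N p k y / krav_nrm N p k)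
       = (krav N p (Suc n) x * krav N p n y - krav N p n x * krav N p (Suc n) y) / krav_nrm N p n"
  using nN
proof (induction n)
  case 0
  then show ?case using p by (simp add: krav_1 field_simps)
next
  case (Suc n)
  have p0: "p \<noteq> 0" using p by simp
  have IH: "(x - y) * (\<Sum>k<Suc n. krav N p k x * krav N p k y / krav_nrm N p k)
      = (krav N p (Suc n) x * krav N p n y - krav N p n x * krav N p (Suc n) y) / krav_nrm N p n"
    by (rule Suc.IH) (use Suc.prems in simp)
  show ?case
    unfolding sum.lessThan_Suc[of _ "Suc n"] krav_three_term_rec[OF p0 Suc.prems]
    by (rule christoffel_darboux_step[OF _ _ beta_c_mult_krav_nrm[OF p Suc.prems] IH])
      (use krav_nrm_pos[OF p, of n N] krav_nrm_pos[OF p, of "Suc n" N] Suc.prems in auto)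
qed

lemma fdiff_pow_kker_right: "fdiff_pow l (kker N p n i 0 x) y = kker N p n i l x y"
proof -
  have eq: "kker N p n i 0 x = (\<lambda>t. \<Sum>k<n. fdiff_pow i (krav N p k) x / krav_nrm N p k * krav N p k t)"
    by (simp add: kker_def fun_eq_iff)
  show ?thesis
    unfolding eq fdiff_pow_sum fdiff_pow_cmult by (simp add: kker_def)
qed

lemma fdiff_pow_kker_left: "fdiff_pow i (\<lambda>t. kker N p n 0 l t y) x = kker N p n i l x y"
proof -
  have eq: "(\<lambda>t. kker N p n 0 l t y) = (\<lambda>t. \<Sum>k<n. fdiff_pow l (krav N p k) y / krav_nrm N p k * krav N p k t)"
    by (simp add: kker_def fun_eq_iff mult_ac)
  show ?thesis
    unfolding eq fdiff_pow_sum fdiff_pow_cmult by (simp add: kker_def mult_ac)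
qed

lemma A_fn_Suc:
  "A_fn N p j (Suc m) x y = fact j / (krav_nrm N p m * ffac (x - y) (Suc j)) * newton_sum (krav N p m) j y x"
  unfolding A_fn_def newton_sum_def by simp

lemma B_fn_Suc:
  "B_fn N p j (Suc m) x y = - fact j / (krav_nrm N p m * ffac (x - y) (Suc j)) * newton_sum (krav N p (Suc m)) j y x"
  unfolding B_fn_def newton_sum_def by simp

lemma kker_eq_A_fn_B_fn:
  assumes p: "0 < p" "p < 1" and mN: "Suc m \<le> N" and x: "ffac (x - y) (Suc j) \<noteq> 0"
  shows "kker N p (Suc m) 0 j x y = A_fn N p j (Suc m) x y * krav N p (Suc m) x + B_fn N p j (Suc m) x y * krav N p m x"
proof -
  define h where "h = krav_nrm N p m"
  define a where "a = krav N p (Suc m) x"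
  define c where "c = krav N p m x"
  have "kker N p (Suc m) 0 j x y
      = fdiff_pow j (\<lambda>t. a / h * (krav N p m t / (x - t)) - c / h * (krav N p (Suc m) t / (x - t))) y"
    unfolding fdiff_pow_kker_right[of j, symmetric] \<comment> \<open>unspecialised, this rule would rewrite its own result\<close>
  proof (rule fdiff_pow_cong)
    fix i assume "i \<le> j"
    then have nz: "x - (y + real i) \<noteq> 0" using x by (auto simp: ffac_eq_0_iff less_Suc_eq_le)
    define t where "t = y + real i"
    have "kker N p (Suc m) 0 0 x t = (x - t) * kker N p (Suc m) 0 0 x t / (x - t)"
      using nz by (simp add: t_def)
    also have "\<dots> = (a * krav N p m t - c * krav N p (Suc m) t) / h / (x - t)"
      using christoffel_darboux[OF p mN, of x t] by (simp add: kker_def a_def c_def h_def)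
    also have "\<dots> = a / h * (krav N p m t / (x - t)) - c / h * (krav N p (Suc m) t / (x - t))"
      by (simp add: diff_divide_distrib)
    finally show "kker N p (Suc m) 0 0 x t = a / h * (krav N p m t / (x - t)) - c / h * (krav N p (Suc m) t / (x - t))" .
  qed
  also have "\<dots> = A_fn N p j (Suc m) x y * a + B_fn N p j (Suc m) x y * c"
    unfolding fdiff_pow_diff fdiff_pow_cmult fdiff_pow_divide_linear[OF x] A_fn_Suc B_fn_Suc h_def
    by (simp add: mult_ac)
  finally show ?thesis by (simp add: a_def c_def)
qed

lemma fdiff_pow_poly_add: "fdiff_pow i (poly (a + b)) y = fdiff_pow i (poly a) y + fdiff_pow i (poly b) y"
  by (induction i arbitrary: y) (simp_all add: fdiff_def)

lemma fdiff_pow_poly_diff: "fdiff_pow i (poly (a - b)) y = fdiff_pow i (poly a) y - fdiff_pow i (poly b) y"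
  by (induction i arbitrary: y) (simp_all add: fdiff_def)

lemma fdiff_pow_poly_smult: "fdiff_pow i (poly (smult c a)) y = c * fdiff_pow i (poly a) y"
  by (induction i arbitrary: y) (simp_all add: fdiff_def algebra_simps)

lemma kker_reproducing:
  assumes p: "0 < p" "p < 1" and m: "m \<le> N" and r: "degree r < m"
  shows "(\<Sum>x=0..N. kker N p m 0 j (real x) y * poly r (real x) * bweight N p x) = fdiff_pow j (poly r) y"
proof -
  have p0: "p \<noteq> 0" using p by simp
  define F where "F = (\<lambda>r. (\<Sum>x=0..N. kker N p m 0 j (real x) y * poly r (real x) * bweight N p x)
                           - fdiff_pow j (poly r) y)"
  have "F r = 0"
  proof (rule linear_functional_eq_0_below_degree[where B="krav_poly N p" and n=m, OF _ _ _ _ _ r])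
    show "F (a + b) = F a + F b" for a b
      unfolding F_def fdiff_pow_poly_add by (simp add: algebra_simps sum.distrib)
    show "F (smult c a) = c * F a" for c a
      unfolding F_def fdiff_pow_poly_smult by (simp add: algebra_simps sum_distrib_left)
    show "degree (krav_poly N p k) = k" "lead_coeff (krav_poly N p k) \<noteq> 0" if "k < m" for k
      using degree_krav_poly[of k N p] lead_coeff_krav_poly[of k N p] that m p0 by simp_all
    show "F (krav_poly N p l) = 0" if l: "l < m" for l
    proof -
      have "(\<Sum>x=0..N. kker N p m 0 j (real x) y * krav N p l (real x) * bweight N p x)
          = (\<Sum>k<m. fdiff_pow j (krav N p k) y / krav_nrm N p k *
                (\<Sum>x=0..N. krav N p k (real x) * krav N p l (real x) * bweight N p x))"
        unfolding kker_def sum_distrib_right sum_distrib_left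
        by (subst sum.swap) (simp add: mult_ac)
      also have "\<dots> = fdiff_pow j (krav N p l) y / krav_nrm N p l * krav_nrm N p l"
        using l m krav_orthogonal[OF p0] unfolding krav_nrm_def power2_eq_square
        by (subst sum.mono_neutral_right[of "{..<m}" "{l}"]) (auto simp: mult_ac)
      also have "\<dots> = fdiff_pow j (krav N p l) y"
        using krav_nrm_pos[OF p, of l N] l m by simp
      finally show ?thesis unfolding F_def by simp
    qed
  qed
  then show ?thesis unfolding F_def by simp
qed

lemma kker_cauchy_schwarz:
  assumes p: "0 < p" "p < 1" and m: "m \<le> N"
  shows "(kker N p m i i x y)\<^sup>2 \<le> kker N p m i i x x * kker N p m i i y y"
proof -
  define h where "h = krav_nrm N p"
  have h: "\<bar>h k\<bar> = h k" "h k \<noteq> 0" if "k < m" for k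
    unfolding h_def using krav_nrm_pos[OF p, of k N] that m by simp_all
  define a where "a = (\<lambda>k. fdiff_pow i (krav N p k) x / sqrt (h k))"
  define b where "b = (\<lambda>k. fdiff_pow i (krav N p k) y / sqrt (h k))"
  have "kker N p m i i x y = (\<Sum>k<m. a k * b k)"
    "kker N p m i i x x = (\<Sum>k<m. (a k)\<^sup>2)" "kker N p m i i y y = (\<Sum>k<m. (b k)\<^sup>2)"
    unfolding kker_def a_def b_def h_def[symmetric] using h
    by (auto intro!: sum.cong simp: power_divide power2_eq_square)
  then show ?thesis by (simp add: Cauchy_Schwarz_ineq_sum)
qed

lemma kker_sym: "kker N p n i i x y = kker N p n i i y x"
  unfolding kker_def by (simp add: mult.commute)

lemma kker_diag_nonneg:
  assumes "0 < p" "p < 1" "n \<le> Suc N"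
  shows "0 \<le> kker N p n i i x x"
  unfolding kker_def
proof (rule sum_nonneg)
  fix k assume "k \<in> {..<n}"
  then have "0 < krav_nrm N p k" using krav_nrm_pos[OF assms(1,2), of k N] assms(3) by simp
  then show "0 \<le> fdiff_pow i (krav N p k) x * fdiff_pow i (krav N p k) x / krav_nrm N p k" by simp
qed

lemma delta_c_ge_1:
  assumes p: "0 < p" "p < 1" and "0 \<le> lam" "0 \<le> mu" and m: "m \<le> N"
  shows "1 \<le> delta_c N p lam mu j m"
proof -
  define k00 where "k00 = kker N p m j j 0 0"
  define k0N where "k0N = kker N p m j j 0 (real N)"
  define kNN where "kNN = kker N p m j j (real N) (real N)"
  have "delta_c N p lam mu j m = 1 + lam * k00 + mu * kNN + lam * mu * (k00 * kNN - k0N\<^sup>2)"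
    unfolding delta_c_def k00_def k0N_def kNN_def kker_sym[of N p m j "real N" 0]
    by (simp add: algebra_simps power2_eq_square)
  moreover have "0 \<le> k00" "0 \<le> kNN" "k0N\<^sup>2 \<le> k00 * kNN"
    unfolding k00_def kNN_def k0N_def using m
    by (simp_all add: kker_diag_nonneg[OF p] kker_cauchy_schwarz[OF p])
  ultimately show ?thesis using assms(3,4) by (simp add: add_nonneg_nonneg)
qed

lemma boundary_system_solution:
  fixes d0 dN k00 k0N kN0 kNN l u :: real
  defines "\<delta> \<equiv> (1 + l * k00) * (1 + u * kNN) - l * u * k0N * kN0"
  assumes "\<delta> \<noteq> 0"
  shows "d0 - l * ((d0 * (1 + u * kNN) - u * k0N * dN) / \<delta>) * k00
           - u * (((1 + l * k00) * dN - l * kN0 * d0) / \<delta>) * k0N = (d0 * (1 + u * kNN) - u * k0N * dN) / \<delta>"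
    and "dN - l * ((d0 * (1 + u * kNN) - u * k0N * dN) / \<delta>) * kN0
           - u * (((1 + l * k00) * dN - l * kN0 * d0) / \<delta>) * kNN = ((1 + l * k00) * dN - l * kN0 * d0) / \<delta>"
  using assms(2) by (simp_all add: field_simps) (simp_all add: \<delta>_def algebra_simps)

lemma Phi_solves_system:
  assumes "delta_c N p lam mu j m \<noteq> 0"
  shows "fdiff_pow j (krav N p m) 0 - lam * Phi1 N p lam mu j m * kker N p m j j 0 0
           - mu * Phi2 N p lam mu j m * kker N p m j j 0 (real N) = Phi1 N p lam mu j m"
    and "fdiff_pow j (krav N p m) (real N) - lam * Phi1 N p lam mu j m * kker N p m j j (real N) 0
           - mu * Phi2 N p lam mu j m * kker N p m j j (real N) (real N) = Phi2 N p lam mu j m"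
  using boundary_system_solution[OF assms[unfolded delta_c_def]]
  unfolding Phi1_def Phi2_def delta_c_def by simp_all

section \<open>Kravchuk--Sobolev polynomials\<close>

lemma sob_ip_diff_left:
  "sob_ip N p lam mu j (a - b) r = sob_ip N p lam mu j a r - sob_ip N p lam mu j b r"
  unfolding sob_ip_def fdiff_pow_poly_diff by (simp add: algebra_simps sum_subtractf)

lemma sob_ip_self_pos:
  assumes "0 < p" "p < 1" "0 \<le> lam" "0 \<le> mu" "q \<noteq> 0" "degree q \<le> N"
  shows "0 < sob_ip N p lam mu j q q"
proof -
  have "0 < (\<Sum>x=0..N. (poly q (real x))\<^sup>2 * bweight N p x)"
    using sum_square_poly_bweight_pos assms by blast
  moreover have "0 \<le> lam * fdiff_pow j (poly q) 0 * fdiff_pow j (poly q) 0"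
    using assms(3) by (simp add: mult.assoc)
  moreover have "0 \<le> mu * fdiff_pow j (poly q) (real N) * fdiff_pow j (poly q) (real N)"
    using assms(4) by (simp add: mult.assoc)
  ultimately show ?thesis unfolding sob_ip_def by (simp add: power2_eq_square)
qed

lemma ks_poly_eqI:
  assumes "0 < p" "p < 1" "0 \<le> lam" "0 \<le> mu" "m \<le> N"
    and Q: "degree Q = m" "lead_coeff Q = 1" "\<And>r. degree r < m \<Longrightarrow> sob_ip N p lam mu j Q r = 0"
  shows "ks_poly N p lam mu j m = Q"
  unfolding ks_poly_def
proof (rule the_equality)
  show "degree Q = m \<and> lead_coeff Q = 1 \<and> (\<forall>r. degree r < m \<longrightarrow> sob_ip N p lam mu j Q r = 0)"
    using Q by simp
  fix q assume q: "degree q = m \<and> lead_coeff q = 1 \<and> (\<forall>r. degree r < m \<longrightarrow> sob_ip N p lam mu j q r = 0)"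
  show "q = Q"
  proof (rule ccontr)
    assume "q \<noteq> Q"
    then have deg: "degree (q - Q) < m"
      using q Q by (intro degree_diff_less_if_coeff_eq) auto
    then have "sob_ip N p lam mu j (q - Q) (q - Q) = 0"
      using q Q(3) by (simp add: sob_ip_diff_left)
    moreover have "0 < sob_ip N p lam mu j (q - Q) (q - Q)"
      using deg \<open>q \<noteq> Q\<close> assms(1-5) by (intro sob_ip_self_pos) auto
    ultimately show False by simp
  qed
qed

definition kker_poly :: "nat \<Rightarrow> real \<Rightarrow> nat \<Rightarrow> nat \<Rightarrow> real \<Rightarrow> real poly" where
  "kker_poly N p m j y = (\<Sum>k<m. smult (fdiff_pow j (krav N p k) y / krav_nrm N p k) (krav_poly N p k))"

lemma poly_kker_poly [simp]: "poly (kker_poly N p m j y) t = kker N p m 0 j t y"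
  by (simp add: kker_poly_def kker_def poly_sum mult_ac)

lemma degree_kker_poly_le: "degree (kker_poly N p m j y) \<le> m - 1"
  unfolding kker_poly_def by (rule degree_sum_le)
    (auto intro!: order.trans[OF degree_smult_le] order.trans[OF degree_krav_poly_le])

lemma coeff_kker_poly_top: "coeff (kker_poly N p m j y) m = 0"
proof (cases "m = 0")
  case True
  then show ?thesis by (simp add: kker_poly_def)
next
  case False
  then show ?thesis using degree_kker_poly_le[of N p m j y] by (intro coeff_eq_0) simp
qed

lemma sob_ip_krav_minus_kker_poly:
  fixes lam mu a b :: real and j :: nat
  assumes p: "0 < p" "p < 1" and m: "m \<le> N" and r: "degree r < m"
  defines "Q \<equiv> krav_poly N p m - smult (lam * a) (kker_poly N p m j 0) - smult (mu * b) (kker_poly N p m j (real N))"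
  shows "sob_ip N p lam mu j Q r = lam * (fdiff_pow j (poly Q) 0 - a) * fdiff_pow j (poly r) 0
           + mu * (fdiff_pow j (poly Q) (real N) - b) * fdiff_pow j (poly r) (real N)"
proof -
  have "(\<Sum>x=0..N. poly Q (real x) * poly r (real x) * bweight N p x)
     = (\<Sum>x=0..N. krav N p m (real x) * poly r (real x) * bweight N p x)
       - lam * a * (\<Sum>x=0..N. kker N p m 0 j (real x) 0 * poly r (real x) * bweight N p x)
       - mu * b * (\<Sum>x=0..N. kker N p m 0 j (real x) (real N) * poly r (real x) * bweight N p x)"
    by (simp add: Q_def algebra_simps sum_subtractf sum_distrib_left sum.distrib)
  also have "\<dots> = - lam * a * fdiff_pow j (poly r) 0 - mu * b * fdiff_pow j (poly r) (real N)"
    using krav_orthogonal_poly[OF m _ r] kker_reproducing[OF p m r] p by simp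
  finally show ?thesis unfolding sob_ip_def by (simp add: algebra_simps)
qed

lemma ks_eq_krav_minus_kker:
  assumes p: "0 < p" "p < 1" and lam: "0 \<le> lam" and mu: "0 \<le> mu" and m: "m \<le> N"
  shows "ks N p lam mu j m t = krav N p m t - lam * Phi1 N p lam mu j m * kker N p m 0 j t 0
           - mu * Phi2 N p lam mu j m * kker N p m 0 j t (real N)"
proof -
  define P1 where "P1 = Phi1 N p lam mu j m"
  define P2 where "P2 = Phi2 N p lam mu j m"
  define Q where "Q = krav_poly N p m - smult (lam * P1) (kker_poly N p m j 0)
                        - smult (mu * P2) (kker_poly N p m j (real N))"
  have poly_Q: "poly Q = (\<lambda>t. krav N p m t - lam * P1 * kker N p m 0 j t 0 - mu * P2 * kker N p m 0 j t (real N))"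
    by (simp add: Q_def fun_eq_iff)
  have "degree (kker_poly N p m j y) \<le> m" for y
    using degree_kker_poly_le[of N p m j y] by linarith
  then have "degree Q \<le> m" "coeff Q m = 1"
    unfolding Q_def using degree_krav_poly_le[of N p m] coeff_krav_poly_top[OF m] p
    by (auto intro!: degree_diff_le order.trans[OF degree_smult_le] simp: coeff_kker_poly_top)
  then have deg_Q: "degree Q = m" by (metis le_antisym le_degree zero_neq_one)
  have "delta_c N p lam mu j m \<noteq> 0" using delta_c_ge_1[OF p lam mu m, of j] by simp
  then have "fdiff_pow j (poly Q) 0 = P1" "fdiff_pow j (poly Q) (real N) = P2"
    using Phi_solves_system unfolding poly_Q fdiff_pow_diff fdiff_pow_cmult fdiff_pow_kker_left P1_def P2_def
    by simp_all
  then have "sob_ip N p lam mu j Q r = 0" if "degree r < m" for r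
    using sob_ip_krav_minus_kker_poly[OF p m that] unfolding Q_def by simp
  then have "ks_poly N p lam mu j m = Q"
    using deg_Q \<open>coeff Q m = 1\<close> by (intro ks_poly_eqI[OF p lam mu m]) simp_all
  then show ?thesis unfolding ks_def by (simp add: poly_Q P1_def P2_def)
qed

lemma ks_eq_C1_D1:
  assumes p: "0 < p" "p < 1" and lam: "0 \<le> lam" and mu: "0 \<le> mu" and mN: "Suc m \<le> N"
    and x: "ffac x (Suc j) \<noteq> 0" "ffac (x - real N) (Suc j) \<noteq> 0"
  shows "ks N p lam mu j (Suc m) x
           = C1 N p lam mu j (Suc m) x * krav N p (Suc m) x + D1 N p lam mu j (Suc m) x * krav N p m x"
  using ks_eq_krav_minus_kker[OF p lam mu mN, of j x]
    kker_eq_A_fn_B_fn[OF p mN, of x 0 j] kker_eq_A_fn_B_fn[OF p mN, of x "real N" j] x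
  unfolding C1_def D1_def by (simp add: algebra_simps)

theorem mainTheorem4:
  fixes N n j :: nat and p lam mu x :: real
  assumes "0 < p" "p < 1" "0 < lam" "0 < mu"
    and "2 \<le> n" "n \<le> N"
    and "\<forall>i\<le>j. x \<noteq> real i \<and> x \<noteq> real N + real i"
  shows "ks N p lam mu j (n - 1) x
         = C2 N p lam mu j n x * krav N p n x + D2 N p lam mu j n x * krav N p (n - 1) x"
proof -
  obtain m where n: "n = Suc (Suc m)" using assms(5) by (metis add_2_eq_Suc le_Suc_ex)
  have x: "ffac x (Suc j) \<noteq> 0" "ffac (x - real N) (Suc j) \<noteq> 0"
    using assms(7) by (auto simp: ffac_eq_0_iff less_Suc_eq_le)
  have p0: "p \<noteq> 0" using assms(1) by simp
  have "beta_c N p (Suc m) \<noteq> 0" using assms(1,2,6) n by (simp add: beta_c_def)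
  moreover have "ks N p lam mu j (Suc m) x
      = C1 N p lam mu j (Suc m) x * krav N p (Suc m) x + D1 N p lam mu j (Suc m) x * krav N p m x"
    using assms(1-4,6) n x by (intro ks_eq_C1_D1) simp_all
  ultimately show ?thesis
    unfolding n diff_Suc_1 C2_def D2_def krav_three_term_rec[OF p0 assms(6)[unfolded n]]
    by (simp add: field_simps)
qed

end
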